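(* Let $X_1,X_2,\ldots$ be i.i.d. with continuous distribution function, in the domain of attraction of a stable law of index $0<\alpha<2$, symmetric if $\alpha=1$, and let $d=d(n)\to\infty$ with $d/n\to0$. Then \[ \sum_{j=1}^n\bigl|X_j\bigl(I\{|X_j|\le\eta_{n,d}\}-I\{|X_j|\le\eta_{n,d}(j)\}\bigr)\bigr|=o_P(A_n). \]
   Context: Domain of attraction: there are $p,q\ge0$, $p+q=1$, $L$ slowly varying at $\infty$ with $P\{X_1>t\}/(L(t)t^{-\alpha})\to p$, $P\{X_1\le-t\}/(L(t)t^{-\alpha})\to q$. $H(t)=P\{|X_1|>t\}$, $H^{-1}$ its generalized inverse; $A_n^2=\frac{\alpha}{2-\alpha}(H^{-1}(d/n))^2d$. $\eta_{n,d}$ is the $d$-th largest among $|X_1|,\ldots,|X_n|$, and $\eta_{n,d}(j)$ is the $d$-th largest among $|X_1|,\ldots,|X_{j-1}|,|X_{j+1}|,\ldots,|X_n|$. *)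

theory Defs
  imports "HOL-Probability.Probability"
begin

definition slowly_varying :: "(real \<Rightarrow> real) \<Rightarrow> bool" where
  "slowly_varying L \<longleftrightarrow>
     eventually (\<lambda>x. L x > 0) at_top \<and>
     (\<forall>c>0. ((\<lambda>x. L (c * x) / L x) \<longlongrightarrow> 1) at_top)"

text \<open>The k-th largest element of a list of reals (k counted from 1).\<close>
definition kth_largest :: "nat \<Rightarrow> real list \<Rightarrow> real" where
  "kth_largest k xs = rev (sort xs) ! (k - 1)"

definition eta :: "(nat \<Rightarrow> 'a \<Rightarrow> real) \<Rightarrow> nat \<Rightarrow> nat \<Rightarrow> 'a \<Rightarrow> real" where
  "eta X n d \<omega> = kth_largest d (map (\<lambda>i. \<bar>X i \<omega>\<bar>) [1..<n+1])"

definition eta_del :: "(nat \<Rightarrow> 'a \<Rightarrow> real) \<Rightarrow> nat \<Rightarrow> nat \<Rightarrow> nat \<Rightarrow> 'a \<Rightarrow> real" where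
  "eta_del X n d j \<omega> = kth_largest d (map (\<lambda>i. \<bar>X i \<omega>\<bar>) (filter (\<lambda>i. i \<noteq> j) [1..<n+1]))"

definition tailH :: "'a measure \<Rightarrow> (nat \<Rightarrow> 'a \<Rightarrow> real) \<Rightarrow> real \<Rightarrow> real" where
  "tailH M X t = measure M {\<omega> \<in> space M. \<bar>X 1 \<omega>\<bar> > t}"

definition tailH_inv :: "'a measure \<Rightarrow> (nat \<Rightarrow> 'a \<Rightarrow> real) \<Rightarrow> real \<Rightarrow> real" where
  "tailH_inv M X s = Inf {t. tailH M X t \<le> s}"

definition A_norm :: "'a measure \<Rightarrow> (nat \<Rightarrow> 'a \<Rightarrow> real) \<Rightarrow> real \<Rightarrow> nat \<Rightarrow> nat \<Rightarrow> real" where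
  "A_norm M X \<alpha> d n = sqrt (\<alpha> / (2 - \<alpha>) * (tailH_inv M X (real d / real n))\<^sup>2 * real d)"

end

theory Submission
  imports Defs
begin

text \<open>
  Write \<open>D\<^sub>n\<close> for the sum in the statement.  Deleting \<open>|X\<^sub>j|\<close> from the sample
  changes the indicator of \<open>|X\<^sub>j| \<le> \<eta>\<close> only when \<open>|X\<^sub>j|\<close> is itself the \<open>d\<close>-th largest
  value \<open>\<eta>\<^sub>n\<^sub>,\<^sub>d\<close>.  Without ties exactly one index has this property, so \<open>D\<^sub>n \<le> \<eta>\<^sub>n\<^sub>,\<^sub>d\<close>.
  Ties have probability zero (continuous distribution, independence), and
  \<open>\<eta>\<^sub>n\<^sub>,\<^sub>d > t\<close> means that at least \<open>d\<close> of the \<open>|X\<^sub>i|\<close> exceed \<open>t\<close>, which by Markov's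
  inequality has probability at most \<open>n H(t) / d\<close>.  Finally, regular variation of the
  tail \<open>H\<close> with index \<open>-\<alpha>\<close> gives \<open>n H(\<epsilon> A\<^sub>n) / d \<rightarrow> 0\<close>, because \<open>\<epsilon> A\<^sub>n\<close> is of order
  \<open>\<surd>d \<cdot> H\<^sup>-\<^sup>1(d/n)\<close> and \<open>\<surd>d \<rightarrow> \<infinity>\<close>.
\<close>


lemma length_filter_map_distinct:
  assumes "distinct xs"
  shows "length (filter P (map g xs)) = card {i \<in> set xs. P (g i)}"
proof -
  have "length (filter P (map g xs)) = length (filter (P \<circ> g) xs)"
    by (simp add: filter_map)
  also have "\<dots> = card ({x. (P \<circ> g) x} \<inter> set xs)"
    by (rule distinct_length_filter[OF assms])
  also have "{x. (P \<circ> g) x} \<inter> set xs = {i \<in> set xs. P (g i)}"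
    by auto
  finally show ?thesis .
qed

lemma kth_largest_iff:
  assumes d1: "1 \<le> d" and dl: "d \<le> length xs"
    and up: "\<And>x y. P x \<Longrightarrow> x \<le> y \<Longrightarrow> P y"
  shows "P (kth_largest d xs) \<longleftrightarrow> d \<le> length (filter P xs)"
proof -
  define s where "s = sort xs"
  define n where "n = length xs"
  have ls: "length s = n" and srt: "sorted s"
    by (simp_all add: s_def n_def)
  have kth: "kth_largest d xs = s ! (n - d)"
    unfolding kth_largest_def using d1 dl by (simp add: rev_nth s_def n_def Suc_diff_le)
  have count: "length (filter P xs) = card {i. i < n \<and> P (s ! i)}"
  proof -
    have "length (filter P xs) = length (filter P s)"
      by (metis mset_filter mset_sort s_def size_mset)
    then show ?thesis by (simp add: length_filter_conv_card ls)
  qed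
  show ?thesis
  proof
    assume "P (kth_largest d xs)"
    then have p: "P (s ! (n - d))" using kth by simp
    have "{n-d..<n} \<subseteq> {i. i < n \<and> P (s ! i)}"
    proof
      fix i assume i: "i \<in> {n-d..<n}"
      then have "s ! (n-d) \<le> s ! i" using sorted_nth_mono[OF srt, of "n-d" i] ls by auto
      then show "i \<in> {i. i < n \<and> P (s ! i)}" using up[OF p] i by auto
    qed
    then have "card {n-d..<n} \<le> card {i. i < n \<and> P (s ! i)}"
      by (intro card_mono) auto
    then show "d \<le> length (filter P xs)" using count dl n_def by simp
  next
    assume h: "d \<le> length (filter P xs)"
    show "P (kth_largest d xs)"
    proof (rule ccontr)
      assume np: "\<not> P (kth_largest d xs)"
      have "{i. i < n \<and> P (s ! i)} \<subseteq> {n-d<..<n}"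
      proof
        fix i assume i: "i \<in> {i. i < n \<and> P (s ! i)}"
        have "n - d < i"
        proof (rule ccontr)
          assume "\<not> n - d < i"
          then have "s ! i \<le> s ! (n-d)"
            using sorted_nth_mono[OF srt, of i "n-d"] ls d1 dl n_def by auto
          then show False using up[of "s ! i" "s ! (n-d)"] i np kth by auto
        qed
        then show "i \<in> {n-d<..<n}" using i by auto
      qed
      then have "card {i. i < n \<and> P (s ! i)} \<le> card {n-d<..<n}"
        by (intro card_mono) auto
      then show False using count h d1 dl n_def by simp
    qed
  qed
qed

lemma eta_iff:
  assumes "1 \<le> d" "d \<le> n" and up: "\<And>x y. P x \<Longrightarrow> x \<le> y \<Longrightarrow> P y"
  shows "P (eta X n d \<omega>) \<longleftrightarrow> d \<le> card {i \<in> {1..n}. P \<bar>X i \<omega>\<bar>}"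
proof -
  have "P (eta X n d \<omega>) \<longleftrightarrow> d \<le> length (filter P (map (\<lambda>i. \<bar>X i \<omega>\<bar>) [1..<n+1]))"
    unfolding eta_def by (rule kth_largest_iff) (use assms in simp_all)
  also have "length (filter P (map (\<lambda>i. \<bar>X i \<omega>\<bar>) [1..<n+1]))
      = card {i \<in> set [1..<n+1]. P \<bar>X i \<omega>\<bar>}"
    by (rule length_filter_map_distinct) simp
  also have "set [1..<n+1] = {1..n}"
    by auto
  finally show ?thesis .
qed

lemma eta_del_iff:
  assumes "1 \<le> d" "d < n" "j \<in> {1..n}" and up: "\<And>x y. P x \<Longrightarrow> x \<le> y \<Longrightarrow> P y"
  shows "P (eta_del X n d j \<omega>) \<longleftrightarrow> d \<le> card {i \<in> {1..n} - {j}. P \<bar>X i \<omega>\<bar>}"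
proof -
  define js where "js = filter (\<lambda>i. i \<noteq> j) [1..<n+1]"
  have set_js: "set js = {1..n} - {j}"
    by (auto simp: js_def)
  have "length js = card ({1..n} - {j})"
    unfolding js_def by (subst distinct_length_filter) (auto intro: arg_cong[where f=card])
  then have len: "length js = n - 1"
    using assms(3) by simp
  have "P (eta_del X n d j \<omega>) \<longleftrightarrow> d \<le> length (filter P (map (\<lambda>i. \<bar>X i \<omega>\<bar>) js))"
    unfolding eta_del_def js_def[symmetric] by (rule kth_largest_iff) (use assms len in simp_all)
  also have "length (filter P (map (\<lambda>i. \<bar>X i \<omega>\<bar>) js)) = card {i \<in> set js. P \<bar>X i \<omega>\<bar>}"
    by (rule length_filter_map_distinct) (simp add: js_def)
  finally show ?thesis
    unfolding set_js .
qed

lemma eta_del_agrees: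
  assumes d: "1 \<le> d" "d < n" and j: "j \<in> {1..n}" and ne: "\<bar>X j \<omega>\<bar> \<noteq> eta X n d \<omega>"
  shows "\<bar>X j \<omega>\<bar> \<le> eta_del X n d j \<omega> \<longleftrightarrow> \<bar>X j \<omega>\<bar> \<le> eta X n d \<omega>"
proof -
  define y where "y = \<bar>X j \<omega>\<bar>"
  have eta_le: "y \<le> eta X n d \<omega> \<longleftrightarrow> d \<le> card {i \<in> {1..n}. y \<le> \<bar>X i \<omega>\<bar>}"
    and eta_less: "y < eta X n d \<omega> \<longleftrightarrow> d \<le> card {i \<in> {1..n}. y < \<bar>X i \<omega>\<bar>}"
    by (rule eta_iff; use d in auto)+
  have del_le: "y \<le> eta_del X n d j \<omega> \<longleftrightarrow> d \<le> card {i \<in> {1..n} - {j}. y \<le> \<bar>X i \<omega>\<bar>}"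
    by (rule eta_del_iff) (use d j in auto)
  consider "eta X n d \<omega> < y" | "y < eta X n d \<omega>"
    using ne unfolding y_def by linarith
  then show ?thesis
  proof cases
    case 1
    have "card {i \<in> {1..n} - {j}. y \<le> \<bar>X i \<omega>\<bar>} \<le> card {i \<in> {1..n}. y \<le> \<bar>X i \<omega>\<bar>}"
      by (intro card_mono) auto
    then show ?thesis
      using 1 eta_le del_le unfolding y_def by linarith
  next
    case 2
    have "card {i \<in> {1..n}. y < \<bar>X i \<omega>\<bar>} \<le> card {i \<in> {1..n} - {j}. y \<le> \<bar>X i \<omega>\<bar>}"
      by (intro card_mono) (auto simp: y_def)
    then show ?thesis
      using 2 eta_less del_le unfolding y_def by linarith
  qed
qed

definition trim_discrepancy :: "(nat \<Rightarrow> 'a \<Rightarrow> real) \<Rightarrow> nat \<Rightarrow> nat \<Rightarrow> 'a \<Rightarrow> real" where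
  "trim_discrepancy X n d \<omega> =
     (\<Sum>j=1..n. \<bar>X j \<omega> * ((if \<bar>X j \<omega>\<bar> \<le> eta X n d \<omega> then 1 else 0)
                          - (if \<bar>X j \<omega>\<bar> \<le> eta_del X n d j \<omega> then 1 else 0))\<bar>)"

text \<open>Without ties only the index attaining \<open>\<eta>\<^sub>n\<^sub>,\<^sub>d\<close> contributes to \<open>D\<^sub>n\<close>, and its
  contribution is at most \<open>\<eta>\<^sub>n\<^sub>,\<^sub>d\<close>.\<close>
lemma trim_discrepancy_le_eta:
  assumes d: "1 \<le> d" "d < n" and inj: "inj_on (\<lambda>i. \<bar>X i \<omega>\<bar>) {1..n}"
  shows "trim_discrepancy X n d \<omega> \<le> eta X n d \<omega>"
proof -
  define E where "E = eta X n d \<omega>"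
  define summand where "summand j = \<bar>X j \<omega> * ((if \<bar>X j \<omega>\<bar> \<le> E then 1 else 0)
                          - (if \<bar>X j \<omega>\<bar> \<le> eta_del X n d j \<omega> then 1 else 0))\<bar>" for j
  define S where "S = {j \<in> {1..n}. \<bar>X j \<omega>\<bar> = E}"
  have E_nonneg: "0 \<le> E"
  proof -
    have "0 \<le> E \<longleftrightarrow> d \<le> card {i \<in> {1..n}. 0 \<le> \<bar>X i \<omega>\<bar>}"
      unfolding E_def by (rule eta_iff) (use d in auto)
    also have "{i \<in> {1..n}. 0 \<le> \<bar>X i \<omega>\<bar>} = {1..n}"
      by auto
    finally show ?thesis
      using d by simp
  qed
  have vanish: "summand j = 0" if "j \<in> {1..n} - S" for j
    using eta_del_agrees[OF d, of j X \<omega>] that by (simp add: S_def summand_def E_def)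
  have "sum summand {1..n} = sum summand S"
    by (rule sum.mono_neutral_right) (use vanish in \<open>auto simp: S_def\<close>)
  also have "\<dots> \<le> real (card S) * E"
    by (rule sum_bounded_above) (auto simp: S_def summand_def abs_mult)
  also have "\<dots> \<le> E"
  proof -
    have "card S = card ((\<lambda>i. \<bar>X i \<omega>\<bar>) ` S)"
      by (rule card_image[symmetric], rule inj_on_subset[OF inj]) (auto simp: S_def)
    also have "\<dots> \<le> card {E}"
      by (rule card_mono) (auto simp: S_def)
    finally show ?thesis
      using E_nonneg mult_right_mono[of "real (card S)" 1 E] by simp
  qed
  finally show ?thesis
    by (simp add: trim_discrepancy_def summand_def E_def)
qed

lemma measure_preimage_eq_if_distr_eq:
  assumes "Z \<in> borel_measurable M" "W \<in> borel_measurable M"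
    and "distr M borel Z = distr M borel W" and "S \<in> sets borel"
  shows "measure M {\<omega> \<in> space M. Z \<omega> \<in> S} = measure M {\<omega> \<in> space M. W \<omega> \<in> S}"
proof -
  have "measure M {\<omega> \<in> space M. Z \<omega> \<in> S} = measure (distr M borel Z) S"
    using assms by (subst measure_distr) (auto intro!: arg_cong[where f="measure M"])
  also have "\<dots> = measure M {\<omega> \<in> space M. W \<omega> \<in> S}"
    using assms by (subst assms(3), subst measure_distr) (auto intro!: arg_cong[where f="measure M"])
  finally show ?thesis .
qed

context prob_space
begin

lemma continuous_cdf_atomless:
  fixes Z :: "'a \<Rightarrow> real"
  assumes Zm: "Z \<in> borel_measurable M"
    and cont: "continuous_on UNIV (\<lambda>t. measure M {\<omega> \<in> space M. Z \<omega> \<le> t})"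
  shows "measure M {\<omega> \<in> space M. Z \<omega> = c} = 0"
proof -
  define F where "F t = measure M {\<omega> \<in> space M. Z \<omega> \<le> t}" for t
  define g where "g k = c - inverse (real (Suc k))" for k
  have "g \<longlonglongrightarrow> c"
    unfolding g_def using tendsto_diff[OF tendsto_const LIMSEQ_inverse_real_of_nat, of c] by simp
  then have "(\<lambda>k. F (g k)) \<longlonglongrightarrow> F c"
    using continuous_on_tendsto_compose[OF cont] unfolding F_def by auto
  then have "(\<lambda>k. F c - F (g k)) \<longlonglongrightarrow> F c - F c"
    by (intro tendsto_diff tendsto_const)
  then have gap_lim: "(\<lambda>k. F c - F (g k)) \<longlonglongrightarrow> 0"
    by simp
  have gap: "measure M {\<omega> \<in> space M. Z \<omega> = c} \<le> F c - F (g k)" for k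
  proof -
    have gk: "g k < c"
      unfolding g_def by simp
    have "measure M {\<omega> \<in> space M. Z \<omega> = c}
        \<le> measure M ({\<omega> \<in> space M. Z \<omega> \<le> c} - {\<omega> \<in> space M. Z \<omega> \<le> g k})"
      using Zm gk by (intro finite_measure_mono) auto
    also have "\<dots> = F c - F (g k)"
      unfolding F_def using Zm gk by (subst finite_measure_Diff) auto
    finally show ?thesis .
  qed
  have "measure M {\<omega> \<in> space M. Z \<omega> = c} \<le> 0"
    using gap by (intro tendsto_lowerbound[OF gap_lim]) auto
  then show ?thesis
    by (simp add: measure_nonneg antisym)
qed

lemma indep_vars_pair:
  fixes X :: "'i \<Rightarrow> 'a \<Rightarrow> real"
  assumes "indep_vars (\<lambda>_. borel) X I" "i \<in> I" "j \<in> I" "i \<noteq> j"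
  shows "indep_var borel (X i) borel (X j)"
proof -
  have "indep_vars (\<lambda>_. borel) X (insert i {j})"
    by (rule indep_vars_subset[OF assms(1)]) (use assms in auto)
  then have "indep_var borel (X i) borel (\<lambda>\<omega>. \<Sum>k\<in>{j}. X k \<omega>)"
    by (rule indep_vars_sum[rotated 2]) (use assms in auto)
  then show ?thesis
    by simp
qed

text \<open>If \<open>Z\<close> is atomless and independent of \<open>W\<close>, then \<open>|W| = |Z|\<close> has probability zero:
  by Fubini, every section \<open>{y. |y| = |x|}\<close> of the joint law is a null set of \<open>Z\<close>.\<close>
lemma indep_atomless_no_tie:
  fixes Z W :: "'a \<Rightarrow> real"
  assumes ind: "indep_var borel W borel Z"
    and atomless: "\<And>c. measure M {\<omega> \<in> space M. Z \<omega> = c} = 0"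
  shows "measure M {\<omega> \<in> space M. \<bar>W \<omega>\<bar> = \<bar>Z \<omega>\<bar>} = 0"
proof -
  have Wm: "W \<in> borel_measurable M" and Zm: "Z \<in> borel_measurable M"
    and joint: "distr M borel W \<Otimes>\<^sub>M distr M borel Z = distr M (borel \<Otimes>\<^sub>M borel) (\<lambda>x. (W x, Z x))"
    using ind unfolding indep_var_distribution_eq by auto
  define \<mu> where "\<mu> = distr M borel Z"
  interpret \<mu>: prob_space \<mu>
    unfolding \<mu>_def using Zm by (rule prob_space_distr)
  define D where "D = {p :: real \<times> real. \<bar>fst p\<bar> = \<bar>snd p\<bar>}"
  have D_sets: "D \<in> sets (borel \<Otimes>\<^sub>M borel)"
  proof -
    have "D = {p \<in> space (borel \<Otimes>\<^sub>M borel). \<bar>fst p\<bar> = \<bar>snd p\<bar>}"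
      by (simp add: D_def space_pair_measure)
    also have "\<dots> \<in> sets (borel \<Otimes>\<^sub>M borel)"
      by measurable
    finally show ?thesis .
  qed
  have section_null: "emeasure \<mu> {y. \<bar>y\<bar> = a} = 0" for a
  proof -
    have point: "emeasure \<mu> {c} = 0" for c
    proof -
      have "emeasure \<mu> {c} = emeasure M {\<omega> \<in> space M. Z \<omega> = c}"
        unfolding \<mu>_def using Zm by (subst emeasure_distr) (auto intro!: arg_cong[where f="emeasure M"])
      then show ?thesis
        using atomless by (simp add: emeasure_eq_measure)
    qed
    have "emeasure \<mu> {y. \<bar>y\<bar> = a} \<le> emeasure \<mu> ({a} \<union> {-a})"
      by (intro emeasure_mono) (auto simp: \<mu>_def)
    also have "\<dots> \<le> emeasure \<mu> {a} + emeasure \<mu> {-a}"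
      by (rule emeasure_subadditive) (auto simp: \<mu>_def)
    finally show ?thesis
      using point by simp
  qed
  have "emeasure (distr M borel W \<Otimes>\<^sub>M \<mu>) D = (\<integral>\<^sup>+x. emeasure \<mu> (Pair x -` D) \<partial>distr M borel W)"
    using D_sets by (intro \<mu>.emeasure_pair_measure_alt) (simp add: \<mu>_def)
  also have "\<dots> = (\<integral>\<^sup>+x. 0 \<partial>distr M borel W)"
  proof (rule nn_integral_cong)
    fix x
    have "Pair x -` D = {y. \<bar>y\<bar> = \<bar>x\<bar>}"
      by (auto simp: D_def)
    then show "emeasure \<mu> (Pair x -` D) = 0"
      using section_null by simp
  qed
  finally have "emeasure (distr M (borel \<Otimes>\<^sub>M borel) (\<lambda>x. (W x, Z x))) D = 0"
    using joint by (simp add: \<mu>_def)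
  then have "emeasure M ((\<lambda>x. (W x, Z x)) -` D \<inter> space M) = 0"
    using D_sets Wm Zm by (subst (asm) emeasure_distr) auto
  moreover have "(\<lambda>x. (W x, Z x)) -` D \<inter> space M = {\<omega> \<in> space M. \<bar>W \<omega>\<bar> = \<bar>Z \<omega>\<bar>}"
    by (auto simp: D_def)
  ultimately show ?thesis
    by (simp add: measure_def)
qed

lemma exceedance_count_Markov:
  fixes X :: "nat \<Rightarrow> 'a \<Rightarrow> real"
  assumes meas: "\<And>i. i \<in> I \<Longrightarrow> X i \<in> borel_measurable M" and I: "finite I" and d: "0 < d"
  shows "measure M {\<omega> \<in> space M. real d \<le> real (card {i \<in> I. t < \<bar>X i \<omega>\<bar>})}
           \<le> (\<Sum>i\<in>I. measure M {\<omega> \<in> space M. t < \<bar>X i \<omega>\<bar>}) / real d"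
proof -
  define A where "A i = {\<omega> \<in> space M. t < \<bar>X i \<omega>\<bar>}" for i
  define u where "u \<omega> = (\<Sum>i\<in>I. indicator (A i) \<omega> :: real)" for \<omega>
  have A_sets: "A i \<in> sets M" if "i \<in> I" for i
  proof -
    have [measurable]: "X i \<in> borel_measurable M"
      using meas that by auto
    show ?thesis
      unfolding A_def by measurable
  qed
  have count_eq: "real (card {i \<in> I. t < \<bar>X i \<omega>\<bar>}) = u \<omega>" if "\<omega> \<in> space M" for \<omega>
  proof -
    have "real (card {i \<in> I. t < \<bar>X i \<omega>\<bar>}) = (\<Sum>i\<in>{i \<in> I. t < \<bar>X i \<omega>\<bar>}. 1)"
      by simp
    also have "\<dots> = (\<Sum>i\<in>I. if t < \<bar>X i \<omega>\<bar> then 1 else 0)"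
      by (rule sum.inter_filter[OF I])
    also have "\<dots> = u \<omega>"
      unfolding u_def using that by (intro sum.cong) (auto simp: A_def)
    finally show ?thesis .
  qed
  have int_A: "integrable M (indicator (A i) :: 'a \<Rightarrow> real)" if "i \<in> I" for i
    using A_sets[OF that] by (intro integrable_real_indicator) (auto simp: emeasure_eq_measure)
  have int_u: "integrable M u"
    unfolding u_def using int_A by auto
  have "{\<omega> \<in> space M. real d \<le> real (card {i \<in> I. t < \<bar>X i \<omega>\<bar>})} = {\<omega> \<in> space M. u \<omega> \<ge> real d}"
    by (rule Collect_cong) (metis count_eq)
  also have "measure M \<dots> \<le> (\<integral>\<omega>. u \<omega> \<partial>M) / real d"
    using int_u[unfolded u_def] d by (intro integral_Markov_inequality_measure[where A="space M"])
      (auto simp: u_def intro!: sum_nonneg)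
  also have "(\<integral>\<omega>. u \<omega> \<partial>M) = (\<Sum>i\<in>I. measure M (A i))"
    unfolding u_def using int_A A_sets by (simp add: integral_sum)
  finally show ?thesis
    unfolding A_def .
qed

text \<open>Off the null set of ties, \<open>D\<^sub>n > t\<close> forces
  \<open>\<eta>\<^sub>n\<^sub>,\<^sub>d > t\<close>, i.e. at least \<open>d\<close> exceedances of \<open>t\<close>.\<close>
lemma trim_discrepancy_tail_bound:
  fixes X :: "nat \<Rightarrow> 'a \<Rightarrow> real"
  assumes meas: "\<And>i. i \<ge> 1 \<Longrightarrow> X i \<in> borel_measurable M"
    and ind: "indep_vars (\<lambda>_. borel) X {1..}"
    and same: "\<And>i. i \<ge> 1 \<Longrightarrow> distr M borel (X i) = distr M borel (X 1)"
    and cont: "continuous_on UNIV (\<lambda>t. measure M {\<omega> \<in> space M. X 1 \<omega> \<le> t})"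
    and d: "1 \<le> d" "d < n"
  shows "measure M {\<omega> \<in> space M. t < trim_discrepancy X n d \<omega>} \<le> real n * tailH M X t / real d"
proof -
  define B where "B = {\<omega> \<in> space M. real d \<le> real (card {i \<in> {1..n}. t < \<bar>X i \<omega>\<bar>})}"
  define Tie where "Tie i j = {\<omega> \<in> space M. \<bar>X i \<omega>\<bar> = \<bar>X j \<omega>\<bar>}" for i j
  define Ties where "Ties = (\<Union>i\<in>{1..n}. \<Union>j\<in>{1..n} - {i}. Tie i j)"
  have meas': "X i \<in> borel_measurable M" if "i \<in> {1..n}" for i
    using meas that by simp
  have atomless: "measure M {\<omega> \<in> space M. X j \<omega> = c} = 0" if "j \<in> {1..n}" for j c
    using measure_preimage_eq_if_distr_eq[OF meas' meas same, of j "{c}"] that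
      continuous_cdf_atomless[OF meas cont, of c] by simp
  have tie_null: "Tie i j \<in> null_sets M" if "i \<in> {1..n}" "j \<in> {1..n}" "i \<noteq> j" for i j
  proof -
    have "indep_var borel (X i) borel (X j)"
      by (rule indep_vars_pair[OF ind]) (use that in auto)
    then have "measure M (Tie i j) = 0"
      unfolding Tie_def using indep_atomless_no_tie atomless[OF that(2)] by blast
    moreover have "Tie i j \<in> sets M"
      unfolding Tie_def using meas' that by measurable
    ultimately show ?thesis
      by (simp add: emeasure_eq_measure null_setsI)
  qed
  have Ties_null: "Ties \<in> null_sets M"
    unfolding Ties_def using tie_null by (intro null_sets_UN') auto
  have B_sets: "B \<in> sets M"
    unfolding B_def using meas' by measurable
  have exceed: "{\<omega> \<in> space M. t < trim_discrepancy X n d \<omega>} \<subseteq> B \<union> Ties"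
  proof
    fix \<omega> assume \<omega>: "\<omega> \<in> {\<omega> \<in> space M. t < trim_discrepancy X n d \<omega>}"
    show "\<omega> \<in> B \<union> Ties"
    proof (cases "\<omega> \<in> Ties")
      case False
      then have "inj_on (\<lambda>i. \<bar>X i \<omega>\<bar>) {1..n}"
        using \<omega> by (auto simp: inj_on_def Ties_def Tie_def)
      then have "t < eta X n d \<omega>"
        using trim_discrepancy_le_eta[OF d] \<omega> by fastforce
      then have "d \<le> card {i \<in> {1..n}. t < \<bar>X i \<omega>\<bar>}"
        using eta_iff[of d n "\<lambda>x. t < x" X \<omega>] d by auto
      then show ?thesis
        using \<omega> by (simp add: B_def)
    qed simp
  qed
  have tail_eq: "measure M {\<omega> \<in> space M. t < \<bar>X i \<omega>\<bar>} = tailH M X t" if "i \<in> {1..n}" for i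
    using measure_preimage_eq_if_distr_eq[OF meas' meas same, of i "{x. t < \<bar>x\<bar>}"] that
    by (simp add: tailH_def)
  have "measure M {\<omega> \<in> space M. t < trim_discrepancy X n d \<omega>} \<le> measure M (B \<union> Ties)"
    using B_sets Ties_null exceed by (intro finite_measure_mono) auto
  also have "\<dots> = measure M B"
    by (rule measure_Un_null_set[OF B_sets Ties_null])
  also have "\<dots> \<le> (\<Sum>i\<in>{1..n}. measure M {\<omega> \<in> space M. t < \<bar>X i \<omega>\<bar>}) / real d"
    unfolding B_def using meas' d by (intro exceedance_count_Markov) auto
  also have "\<dots> = real n * tailH M X t / real d"
    using tail_eq by simp
  finally show ?thesis .
qed

lemma tailH_antimono:
  assumes "X 1 \<in> borel_measurable M" and "s \<le> t"
  shows "tailH M X t \<le> tailH M X s"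
  unfolding tailH_def using assms by (intro finite_measure_mono) auto

lemma tailH_negative:
  assumes "t < 0"
  shows "tailH M X t = 1"
proof -
  have "{\<omega> \<in> space M. \<bar>X 1 \<omega>\<bar> > t} = space M"
    using assms by auto
  then show ?thesis
    by (simp add: tailH_def prob_space)
qed

lemma tailH_vanishes:
  assumes [measurable]: "X 1 \<in> borel_measurable M" and s: "0 < s"
  shows "\<exists>t. tailH M X t \<le> s"
proof -
  define A where "A k = {\<omega> \<in> space M. real k < \<bar>X 1 \<omega>\<bar>}" for k :: nat
  have "(\<lambda>k. measure M (A k)) \<longlonglongrightarrow> measure M (\<Inter>k. A k)"
    by (rule finite_Lim_measure_decseq) (auto simp: A_def decseq_def simp del: One_nat_def)
  moreover have "(\<Inter>k. A k) = {}"
  proof -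
    have "\<omega> \<notin> A (nat \<lceil>\<bar>X 1 \<omega>\<bar>\<rceil>)" for \<omega>
      unfolding A_def by (simp add: not_less real_nat_ceiling_ge)
    then show ?thesis
      by blast
  qed
  ultimately have "(\<lambda>k. measure M (A k)) \<longlonglongrightarrow> 0"
    by simp
  then have "eventually (\<lambda>k. measure M (A k) < s) sequentially"
    using s by (rule order_tendstoD(2))
  then obtain k where "measure M (A k) < s"
    by (auto dest: eventually_happens)
  then show ?thesis
    unfolding A_def tailH_def by (intro exI[of _ "real k"]) simp
qed

text \<open>For \<open>t \<ge> 0\<close> the tail of \<open>|X\<^sub>1|\<close> splits into the two one-sided tails; the atom at
  \<open>-t\<close> is harmless because the distribution is continuous.\<close>
lemma tailH_split:
  assumes [measurable]: "X 1 \<in> borel_measurable M"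
    and cont: "continuous_on UNIV (\<lambda>t. measure M {\<omega> \<in> space M. X 1 \<omega> \<le> t})"
    and t: "0 \<le> t"
  shows "tailH M X t = measure M {\<omega> \<in> space M. X 1 \<omega> > t} + measure M {\<omega> \<in> space M. X 1 \<omega> \<le> -t}"
proof -
  have "{\<omega> \<in> space M. \<bar>X 1 \<omega>\<bar> > t} = {\<omega> \<in> space M. X 1 \<omega> > t} \<union> {\<omega> \<in> space M. X 1 \<omega> < -t}"
    using t by auto
  then have "tailH M X t = measure M {\<omega> \<in> space M. X 1 \<omega> > t} + measure M {\<omega> \<in> space M. X 1 \<omega> < -t}"
    unfolding tailH_def using t by (simp only:) (intro finite_measure_Union; auto simp del: One_nat_def)
  moreover have "{\<omega> \<in> space M. X 1 \<omega> \<le> -t} = {\<omega> \<in> space M. X 1 \<omega> < -t} \<union> {\<omega> \<in> space M. X 1 \<omega> = -t}"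
    by auto
  then have "measure M {\<omega> \<in> space M. X 1 \<omega> \<le> -t}
      = measure M {\<omega> \<in> space M. X 1 \<omega> < -t} + measure M {\<omega> \<in> space M. X 1 \<omega> = -t}"
    by (simp only:) (intro finite_measure_Union; auto simp del: One_nat_def)
  moreover have "measure M {\<omega> \<in> space M. X 1 \<omega> = -t} = 0"
    by (rule continuous_cdf_atomless) (use cont in \<open>auto simp del: One_nat_def\<close>)
  ultimately show ?thesis
    by simp
qed

lemma tailH_regularly_varying:
  assumes meas: "X 1 \<in> borel_measurable M"
    and cont: "continuous_on UNIV (\<lambda>t. measure M {\<omega> \<in> space M. X 1 \<omega> \<le> t})"
    and pq: "p + q = 1"
    and right: "((\<lambda>t. measure M {\<omega> \<in> space M. X 1 \<omega> > t} / (L t * t powr (-\<alpha>))) \<longlongrightarrow> p) at_top"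
    and left: "((\<lambda>t. measure M {\<omega> \<in> space M. X 1 \<omega> \<le> -t} / (L t * t powr (-\<alpha>))) \<longlongrightarrow> q) at_top"
  shows "((\<lambda>t. tailH M X t / (L t * t powr (-\<alpha>))) \<longlongrightarrow> 1) at_top"
proof -
  have "((\<lambda>t. measure M {\<omega> \<in> space M. X 1 \<omega> > t} / (L t * t powr (-\<alpha>))
        + measure M {\<omega> \<in> space M. X 1 \<omega> \<le> -t} / (L t * t powr (-\<alpha>))) \<longlongrightarrow> 1) at_top"
    using tendsto_add[OF right left] pq by simp
  moreover have "eventually (\<lambda>t. measure M {\<omega> \<in> space M. X 1 \<omega> > t} / (L t * t powr (-\<alpha>))
        + measure M {\<omega> \<in> space M. X 1 \<omega> \<le> -t} / (L t * t powr (-\<alpha>))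
        = tailH M X t / (L t * t powr (-\<alpha>))) at_top"
    using eventually_ge_at_top[of 0]
    by eventually_elim (simp add: tailH_split[where X=X, OF meas cont] add_divide_distrib)
  ultimately show ?thesis
    by (rule Lim_transform_eventually)
qed

lemma tailH_positive:
  assumes meas: "X 1 \<in> borel_measurable M"
    and rv: "((\<lambda>t. tailH M X t / g t) \<longlongrightarrow> 1) at_top"
  shows "0 < tailH M X x"
proof -
  obtain t0 where t0: "\<And>t. t \<ge> t0 \<Longrightarrow> tailH M X t / g t > 1/2"
    using order_tendstoD(1)[OF rv, of "1/2"] by (auto simp: eventually_at_top_linorder)
  have "tailH M X (max x t0) \<noteq> 0"
    using t0[of "max x t0"] by auto
  then have "0 < tailH M X (max x t0)"
    by (simp add: tailH_def order_less_le)
  also have "\<dots> \<le> tailH M X x"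
    by (rule tailH_antimono[where X=X, OF meas]) simp
  finally show ?thesis .
qed

end

lemma regular_variation_ratio:
  fixes H L :: "real \<Rightarrow> real"
  assumes sv: "slowly_varying L"
    and rv: "((\<lambda>t. H t / (L t * t powr (-\<alpha>))) \<longlongrightarrow> 1) at_top"
    and K: "0 < K"
  shows "((\<lambda>t. H (K * t) / H t) \<longlongrightarrow> K powr (-\<alpha>)) at_top"
proof -
  define g where "g t = L t * t powr (-\<alpha>)" for t
  have rv': "((\<lambda>t. H t / g t) \<longlongrightarrow> 1) at_top"
    using rv unfolding g_def .
  have L_pos: "eventually (\<lambda>t. L t > 0) at_top" and L_ratio: "((\<lambda>t. L (K * t) / L t) \<longlongrightarrow> 1) at_top"
    using sv K unfolding slowly_varying_def by auto
  have K_lim: "filterlim (\<lambda>t. K * t) at_top at_top"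
    by (rule filterlim_tendsto_pos_mult_at_top[OF tendsto_const K filterlim_ident])
  have "((\<lambda>t. H (K * t) / g (K * t)) \<longlongrightarrow> 1) at_top"
    using filterlim_compose[OF rv' K_lim] by simp
  moreover have "((\<lambda>t. g t / H t) \<longlongrightarrow> 1) at_top"
    using tendsto_inverse[OF rv'] by (simp add: inverse_eq_divide)
  ultimately have "((\<lambda>t. (H (K * t) / g (K * t)) * (L (K * t) / L t) * K powr (-\<alpha>) * (g t / H t))
      \<longlongrightarrow> 1 * 1 * K powr (-\<alpha>) * 1) at_top"
    by (intro tendsto_mult L_ratio tendsto_const)
  moreover have "eventually (\<lambda>t. (H (K * t) / g (K * t)) * (L (K * t) / L t) * K powr (-\<alpha>) * (g t / H t)
      = H (K * t) / H t) at_top"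
  proof -
    have "eventually (\<lambda>t. H t / g t > 1/2) at_top"
      using rv' by (intro order_tendstoD(1)) auto
    moreover have "eventually (\<lambda>t. L (K * t) > 0) at_top"
      using filterlim_iff[THEN iffD1, OF K_lim] L_pos by auto
    ultimately show ?thesis
      using L_pos eventually_gt_at_top[of 0]
    proof eventually_elim
      case (elim t)
      have "g (K * t) = L (K * t) * K powr (-\<alpha>) * t powr (-\<alpha>)"
        unfolding g_def using K elim by (simp add: powr_mult)
      moreover have "g t \<noteq> 0" "H t \<noteq> 0" "0 < K powr (-\<alpha>)" "0 < t powr (-\<alpha>)"
        using K elim by auto
      ultimately show ?case
        using elim by (simp add: g_def field_simps)
    qed
  qed
  ultimately show ?thesis
    by (simp add: Lim_transform_eventually)
qed

lemma tail_decay_factor: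
  fixes H :: "real \<Rightarrow> real"
  assumes rv: "\<And>K. 0 < K \<Longrightarrow> ((\<lambda>t. H (K * t) / H t) \<longlongrightarrow> K powr (-\<alpha>)) at_top"
    and pos: "\<And>t. 0 < H t" and \<alpha>: "0 < \<alpha>" and e: "0 < e"
  obtains K R where "0 < K" "\<And>t. R \<le> t \<Longrightarrow> H (K * t) \<le> e * H t"
proof -
  have "((\<lambda>K. K powr (-\<alpha>)) \<longlongrightarrow> 0) at_top"
    by (rule tendsto_neg_powr[OF _ filterlim_ident]) (use \<alpha> in simp)
  then have "eventually (\<lambda>K. K powr (-\<alpha>) < e / 2) at_top"
    using e by (intro order_tendstoD(2)) auto
  then obtain N where N: "\<And>K. N \<le> K \<Longrightarrow> K powr (-\<alpha>) < e / 2"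
    by (auto simp: eventually_at_top_linorder)
  define K where "K = max N 1"
  have K: "0 < K" "K powr (-\<alpha>) < e / 2"
    using N[of K] by (auto simp: K_def)
  have "eventually (\<lambda>t. H (K * t) / H t < K powr (-\<alpha>) + e / 2) at_top"
    using rv[OF K(1)] e by (intro order_tendstoD(2)) auto
  then obtain R where R: "\<And>t. R \<le> t \<Longrightarrow> H (K * t) / H t < K powr (-\<alpha>) + e / 2"
    by (auto simp: eventually_at_top_linorder)
  have "H (K * t) \<le> e * H t" if "R \<le> t" for t
  proof -
    have "H (K * t) < (K powr (-\<alpha>) + e / 2) * H t"
      using R[OF that] pos[of t] by (simp add: divide_less_eq)
    also have "\<dots> \<le> e * H t"
      using K(2) pos[of t] by (intro mult_right_mono) auto
    finally show ?thesis
      by simp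
  qed
  then show ?thesis
    using K(1) that by blast
qed

definition gen_inv :: "(real \<Rightarrow> real) \<Rightarrow> real \<Rightarrow> real" where
  "gen_inv H s = Inf {t. H t \<le> s}"

lemma A_norm_lower_bound:
  assumes "0 \<le> \<epsilon>" "0 \<le> \<alpha>" "\<alpha> < 2"
  shows "\<epsilon> * sqrt (\<alpha> / (2 - \<alpha>)) * sqrt (real d) * gen_inv (tailH M X) (real d / real n)
      \<le> \<epsilon> * A_norm M X \<alpha> d n"
proof -
  define T where "T = gen_inv (tailH M X) (real d / real n)"
  have "sqrt (\<alpha> / (2 - \<alpha>)) * sqrt (real d) * T \<le> sqrt (\<alpha> / (2 - \<alpha>)) * sqrt (real d) * \<bar>T\<bar>"
    using assms by (intro mult_left_mono) auto
  also have "\<dots> = sqrt (\<alpha> / (2 - \<alpha>) * T\<^sup>2 * real d)"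
    unfolding real_sqrt_mult real_sqrt_abs by (simp add: mult_ac)
  also have "\<dots> = A_norm M X \<alpha> d n"
    unfolding A_norm_def tailH_inv_def T_def gen_inv_def by (rule refl)
  finally show ?thesis
    using assms(1) mult_left_mono by (fastforce simp: T_def mult.assoc)
qed

lemma gen_inv_lower:
  assumes anti: "\<And>x y. x \<le> y \<Longrightarrow> H y \<le> H x" and reach: "\<exists>t. H t \<le> s" and r: "s < H r"
  shows "r \<le> gen_inv H s"
  unfolding gen_inv_def
proof (rule cInf_greatest)
  show "{t. H t \<le> s} \<noteq> {}"
    using reach by auto
next
  fix t assume "t \<in> {t. H t \<le> s}"
  then show "r \<le> t"
    using anti[of t r] r by force
qed

lemma gen_inv_approx:
  assumes reach: "\<exists>t. H t \<le> s" and bdd: "bdd_below {t. H t \<le> s}" and e: "0 < e"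
  shows "\<exists>t. H t \<le> s \<and> t < gen_inv H s + e"
  using cInf_less_iff[of "{t. H t \<le> s}" "gen_inv H s + e"] reach bdd e
  unfolding gen_inv_def by auto

lemma tail_beyond_scaled_quantile:
  fixes H :: "real \<Rightarrow> real"
  assumes anti: "\<And>x y. x \<le> y \<Longrightarrow> H y \<le> H x"
    and neg: "\<And>t. t < 0 \<Longrightarrow> H t = 1" and reach: "\<exists>t. H t \<le> s"
    and K: "0 < K" and decay: "\<And>t. R \<le> t \<Longrightarrow> H (K * t) \<le> e * H t" and e: "0 \<le> e"
    and s: "s < 1" "s < H (max R 1)"
    and b: "2 * K \<le> b" and x: "b * gen_inv H s \<le> x"
  shows "H x \<le> e * s"
proof -
  define T where "T = gen_inv H s"
  have "max R 1 \<le> T"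
    unfolding T_def by (rule gen_inv_lower[OF anti reach s(2)])
  then have T: "1 \<le> T" "R \<le> T"
    by auto
  have "0 \<le> t" if "H t \<le> s" for t
    using neg[of t] that s(1) by (cases "t < 0") auto
  then have "bdd_below {t. H t \<le> s}"
    by (intro bdd_belowI[of _ 0]) auto
  then obtain t' where t': "H t' \<le> s" "t' < T + 1"
    using gen_inv_approx[OF reach _ zero_less_one] unfolding T_def by blast
  have "R \<le> t'"
  proof (rule ccontr)
    assume "\<not> R \<le> t'"
    then have "H (max R 1) \<le> H t'"
      using anti[of t' R] anti[of R "max R 1"] by simp
    then show False
      using t'(1) s(2) by simp
  qed
  have "K * t' \<le> K * (2 * T)"
    using K T t'(2) by (intro mult_left_mono) auto
  also have "\<dots> \<le> b * T"
    using mult_right_mono[OF b, of T] T(1) by simp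
  also have "\<dots> \<le> x"
    using x by (simp add: T_def)
  finally have "H x \<le> H (K * t')"
    by (rule anti)
  also have "\<dots> \<le> e * H t'"
    by (rule decay[OF \<open>R \<le> t'\<close>])
  also have "\<dots> \<le> e * s"
    using e t'(1) by (intro mult_left_mono) auto
  finally show ?thesis .
qed

lemma normalised_tail_vanishes:
  fixes H :: "real \<Rightarrow> real" and d :: "nat \<Rightarrow> nat" and t :: "nat \<Rightarrow> real"
  assumes anti: "\<And>x y. x \<le> y \<Longrightarrow> H y \<le> H x" and pos: "\<And>t. 0 < H t"
    and neg: "\<And>t. t < 0 \<Longrightarrow> H t = 1" and reach: "\<And>s. 0 < s \<Longrightarrow> \<exists>t. H t \<le> s"
    and rv: "\<And>K. 0 < K \<Longrightarrow> ((\<lambda>t. H (K * t) / H t) \<longlongrightarrow> K powr (-\<alpha>)) at_top"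
    and \<alpha>: "0 < \<alpha>" and c: "0 < c"
    and d_lim: "filterlim d at_top sequentially"
    and d_n: "(\<lambda>n. real (d n) / real n) \<longlonglongrightarrow> 0"
    and level: "\<And>n. c * sqrt (real (d n)) * gen_inv H (real (d n) / real n) \<le> t n"
  shows "(\<lambda>n. real n / real (d n) * H (t n)) \<longlonglongrightarrow> 0"
proof (rule order_tendstoI)
  fix a :: real assume "a < 0"
  moreover have "0 \<le> real n / real (d n) * H (t n)" for n
    using pos[of "t n"] by simp
  ultimately show "eventually (\<lambda>n. a < real n / real (d n) * H (t n)) sequentially"
    by (simp add: order_less_le_trans)
next
  fix e :: real assume e: "0 < e"
  obtain K R where K: "0 < K" and R: "\<And>t. R \<le> t \<Longrightarrow> H (K * t) \<le> e / 2 * H t"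
    using tail_decay_factor[OF rv pos \<alpha>, of "e / 2"] e by auto
  have "filterlim (\<lambda>n. real (d n)) at_top sequentially"
    by (rule filterlim_compose[OF filterlim_real_sequentially d_lim])
  then have "eventually (\<lambda>n. max 1 ((2 * K / c)\<^sup>2) \<le> real (d n)) sequentially"
    unfolding filterlim_at_top by blast
  moreover have "eventually (\<lambda>n. real (d n) / real n < min 1 (H (max R 1))) sequentially"
    using d_n pos by (intro order_tendstoD(2)) auto
  moreover have "eventually (\<lambda>n. 0 < n) sequentially"
    by (rule eventually_gt_at_top)
  ultimately show "eventually (\<lambda>n. real n / real (d n) * H (t n) < e) sequentially"
  proof eventually_elim
    case (elim n)
    define s where "s = real (d n) / real n"
    have dn: "1 \<le> real (d n)" "(2 * K / c)\<^sup>2 \<le> real (d n)" and n: "0 < n"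
      using elim by auto
    have "2 * K \<le> c * sqrt (real (d n))"
      using real_le_rsqrt[OF dn(2)] c by (simp add: field_simps)
    then have "H (t n) \<le> e / 2 * s"
      using elim dn(1) n e level[of n] unfolding s_def
      by (intro tail_beyond_scaled_quantile[OF anti neg reach K R]) auto
    then have "real n / real (d n) * H (t n) \<le> real n / real (d n) * (e / 2 * s)"
      by (intro mult_left_mono) auto
    also have "\<dots> = e / 2"
      using dn(1) n by (simp add: s_def)
    finally show ?case
      using e by linarith
  qed
qed

theorem lemma4p3:
  fixes M :: "'a measure" and X :: "nat \<Rightarrow> 'a \<Rightarrow> real"
    and \<alpha> :: real and d :: "nat \<Rightarrow> nat"
  assumes "prob_space M"
    and "\<And>i. i \<ge> 1 \<Longrightarrow> X i \<in> borel_measurable M"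
    and "prob_space.indep_vars M (\<lambda>_. borel) X {1..}"
    and "\<And>i. i \<ge> 1 \<Longrightarrow> distr M borel (X i) = distr M borel (X 1)"
    and "continuous_on UNIV (\<lambda>t. measure M {\<omega> \<in> space M. X 1 \<omega> \<le> t})"
    and "0 < \<alpha>" and "\<alpha> < 2"
    and "\<exists>p q L. p \<ge> 0 \<and> q \<ge> 0 \<and> p + q = 1 \<and> slowly_varying L \<and>
           ((\<lambda>t. measure M {\<omega> \<in> space M. X 1 \<omega> > t} / (L t * t powr (-\<alpha>))) \<longlongrightarrow> p) at_top \<and>
           ((\<lambda>t. measure M {\<omega> \<in> space M. X 1 \<omega> \<le> -t} / (L t * t powr (-\<alpha>))) \<longlongrightarrow> q) at_top \<and>
           (\<alpha> = 1 \<longrightarrow> p = q)"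
    and "filterlim d at_top sequentially"
    and "(\<lambda>n. real (d n) / real n) \<longlonglongrightarrow> 0"
  shows "\<forall>\<epsilon>>0. (\<lambda>n. measure M {\<omega> \<in> space M.
            (\<Sum>j=1..n. \<bar>X j \<omega> * ((if \<bar>X j \<omega>\<bar> \<le> eta X n (d n) \<omega> then 1 else 0)
                                  - (if \<bar>X j \<omega>\<bar> \<le> eta_del X n (d n) j \<omega> then 1 else 0))\<bar>)
              > \<epsilon> * A_norm M X \<alpha> (d n) n}) \<longlonglongrightarrow> 0"
proof (intro allI impI)
  fix \<epsilon> :: real assume \<epsilon>: "\<epsilon> > 0"
  interpret prob_space M by (rule assms(1))
  have meas: "X 1 \<in> borel_measurable M"
    using assms(2) by simp
  obtain p q L where pq: "p + q = 1" and sv: "slowly_varying L"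
    and right: "((\<lambda>t. measure M {\<omega> \<in> space M. X 1 \<omega> > t} / (L t * t powr (-\<alpha>))) \<longlongrightarrow> p) at_top"
    and left: "((\<lambda>t. measure M {\<omega> \<in> space M. X 1 \<omega> \<le> -t} / (L t * t powr (-\<alpha>))) \<longlongrightarrow> q) at_top"
    using assms(8) by blast
  have rv: "((\<lambda>t. tailH M X t / (L t * t powr (-\<alpha>))) \<longlongrightarrow> 1) at_top"
    by (rule tailH_regularly_varying[where X=X, OF meas assms(5) pq right left])
  define t where "t n = \<epsilon> * A_norm M X \<alpha> (d n) n" for n
  have level: "\<epsilon> * sqrt (\<alpha> / (2 - \<alpha>)) * sqrt (real (d n)) * gen_inv (tailH M X) (real (d n) / real n)
      \<le> t n" for n
    unfolding t_def using \<epsilon> assms(6,7) by (intro A_norm_lower_bound) auto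
  have tail_lim: "(\<lambda>n. real n / real (d n) * tailH M X (t n)) \<longlonglongrightarrow> 0"
    using assms(6,7,9,10) \<epsilon> level tailH_positive[where X=X, OF meas rv]
      tailH_antimono[where X=X, OF meas] tailH_negative tailH_vanishes[where X=X, OF meas]
      regular_variation_ratio[OF sv rv]
    by (intro normalised_tail_vanishes[of "tailH M X" \<alpha> "\<epsilon> * sqrt (\<alpha> / (2 - \<alpha>))" d]) auto
  have "eventually (\<lambda>n. 1 \<le> d n \<and> d n < n) sequentially"
  proof -
    have "eventually (\<lambda>n. real (d n) / real n < 1) sequentially"
      using assms(10) by (intro order_tendstoD(2)) auto
    moreover have "eventually (\<lambda>n. 1 \<le> d n) sequentially"
      using assms(9) by (simp add: filterlim_at_top)
    ultimately show ?thesis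
      using eventually_gt_at_top[of 0] by eventually_elim (auto simp: divide_less_eq)
  qed
  then have "eventually (\<lambda>n. measure M {\<omega> \<in> space M. t n < trim_discrepancy X n (d n) \<omega>}
      \<le> real n / real (d n) * tailH M X (t n)) sequentially"
    by eventually_elim
      (use trim_discrepancy_tail_bound[OF assms(2-5)] in simp)
  then have "(\<lambda>n. measure M {\<omega> \<in> space M. t n < trim_discrepancy X n (d n) \<omega>}) \<longlonglongrightarrow> 0"
    by (intro tendsto_sandwich[OF _ _ tendsto_const tail_lim]) auto
  then show "(\<lambda>n. measure M {\<omega> \<in> space M.
            (\<Sum>j=1..n. \<bar>X j \<omega> * ((if \<bar>X j \<omega>\<bar> \<le> eta X n (d n) \<omega> then 1 else 0)
                                  - (if \<bar>X j \<omega>\<bar> \<le> eta_del X n (d n) j \<omega> then 1 else 0))\<bar>)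
              > \<epsilon> * A_norm M X \<alpha> (d n) n}) \<longlonglongrightarrow> 0"
    by (simp add: t_def trim_discrepancy_def)
qed

end
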